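(* Let $l_1,l_2,l_3$ be positive integers with $l_1=\min\{l_1,l_2,l_3\}$, $l_2\ge 2$, $l_3\ge 2$, and let $G=\Theta(l_1,l_2,l_3)$. Suppose $l_1$ and $l_3$ have the same parity and $l_1$ and $l_2$ have different parity. If $l_1+l_3\ge 6$, then $G$ is enumeratively chromatic-choosable. Moreover, if $l_1+l_3=4$, then $P_\ell(G,m)=P(G,m)$ for every integer $m\ge 4$.
   Context: For positive integers $l_1,l_2,l_3$, the theta graph $\Theta(l_1,l_2,l_3)$ consists of two end vertices joined by three internally disjoint paths of lengths (numbers of edges) $l_1,l_2,l_3$. An $m$-assignment $L$ for a graph $G$ assigns to each vertex $v$ a set $L(v)$ of $m$ colors; $P(G,L)$ denotes the number of proper colorings $f$ of $G$ with $f(v)\in L(v)$ for all $v$. $P(G,m)$ is the chromatic polynomial (number of proper colorings with colors from $\{1,\dots,m\}$), and the list color function $P_\ell(G,m)$ is the minimum of $P(G,L)$ over all $m$-assignments $L$. $G$ is enumeratively chromatic-choosable if $P_\ell(G,m)=P(G,m)$ for all $m\in\mathbb{N}$. *)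

theory Defs
  imports "HOL-Library.FuncSet"
begin

text \<open>Graphs are given by a vertex set V and a symmetric edge relation E (set of ordered pairs).\<close>

definition proper_col :: "('v \<times> 'v) set \<Rightarrow> ('v \<Rightarrow> nat) \<Rightarrow> bool" where
  "proper_col E f \<longleftrightarrow> (\<forall>(x, y) \<in> E. f x \<noteq> f y)"

definition num_list_col :: "'v set \<Rightarrow> ('v \<times> 'v) set \<Rightarrow> ('v \<Rightarrow> nat set) \<Rightarrow> nat" where
  "num_list_col V E L = card {f \<in> PiE V L. proper_col E f}"

definition chrom_poly :: "'v set \<Rightarrow> ('v \<times> 'v) set \<Rightarrow> nat \<Rightarrow> nat" where
  "chrom_poly V E m = num_list_col V E (\<lambda>_. {1..m})"

definition is_m_assignment :: "'v set \<Rightarrow> nat \<Rightarrow> ('v \<Rightarrow> nat set) \<Rightarrow> bool" where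
  "is_m_assignment V m L \<longleftrightarrow> (\<forall>v\<in>V. finite (L v) \<and> card (L v) = m)"

definition list_col_fun :: "'v set \<Rightarrow> ('v \<times> 'v) set \<Rightarrow> nat \<Rightarrow> nat" where
  "list_col_fun V E m = Inf {num_list_col V E L | L. is_m_assignment V m L}"

definition enum_chrom_choosable :: "'v set \<Rightarrow> ('v \<times> 'v) set \<Rightarrow> bool" where
  "enum_chrom_choosable V E \<longleftrightarrow> (\<forall>m. list_col_fun V E m = chrom_poly V E m)"

text \<open>Theta graph: end vertices (0,0) and (0,1); the j-th vertex (0 \<le> j \<le> l_i)
  of path i \<in> {1,2,3} is theta_pt, with internal vertices (i,j).\<close>
definition theta_len :: "nat \<Rightarrow> nat \<Rightarrow> nat \<Rightarrow> nat \<Rightarrow> nat" where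
  "theta_len l1 l2 l3 i = (if i = 1 then l1 else if i = 2 then l2 else l3)"

definition theta_pt :: "nat \<Rightarrow> nat \<Rightarrow> nat \<Rightarrow> nat \<Rightarrow> nat \<Rightarrow> nat \<times> nat" where
  "theta_pt l1 l2 l3 i j =
     (if j = 0 then (0, 0) else if j = theta_len l1 l2 l3 i then (0, 1) else (i, j))"

definition theta_V :: "nat \<Rightarrow> nat \<Rightarrow> nat \<Rightarrow> (nat \<times> nat) set" where
  "theta_V l1 l2 l3 = {theta_pt l1 l2 l3 i j | i j. i \<in> {1,2,3} \<and> j \<le> theta_len l1 l2 l3 i}"

definition theta_E :: "nat \<Rightarrow> nat \<Rightarrow> nat \<Rightarrow> ((nat \<times> nat) \<times> (nat \<times> nat)) set" where
  "theta_E l1 l2 l3 =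
     (let A = {(theta_pt l1 l2 l3 i j, theta_pt l1 l2 l3 i (Suc j)) | i j.
                 i \<in> {1,2,3} \<and> j < theta_len l1 l2 l3 i}
      in A \<union> A\<inverse>)"

end

theory Submission
  imports Defs
begin

(* Colour the two branch vertices of the theta graph first: the number of L-colourings is then
   the sum, over colours a and b of the branch vertices, of the product of the numbers of
   L-colourings of the three paths with end colours a and b. For the lists {1..m} these path
   numbers are path_eq m l if a = b and path_ne m l otherwise, which gives P(G, m).

   For an arbitrary m-assignment with m >= 3, the number for a path of length l is at least the
   smaller of the two, which is path_eq m l for odd l and path_ne m l for even l; summed over the
   colours of one end, the number for path 2 is at least m * path_ne m l2 - 1 for odd l2 and
   m * path_ne m l2 + 1 for even l2; and paths 1 and 3 form an even cycle of length
   l1 + l3 >= 4, whose number of list colourings is at least its chromatic polynomial (rotate the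
   cycle so that two neighbouring lists differ and bound the colourings at the closing vertex).
   Writing the number for path 2 as its pointwise minimum plus a nonnegative excess and combining
   the three bounds gives P(G, L) >= P(G, m). For m <= 2 the chromatic polynomial vanishes, since
   paths 1 and 2 form an odd cycle. *)

lemma sum_of_bool_neq_mult:
  fixes f :: "'a \<Rightarrow> 'b::semiring_1"
  shows "(\<Sum>x\<in>A. of_bool (c \<noteq> x) * f x) = sum f (A - {c})"
proof (cases "finite A")
  case True
  moreover have "A \<inter> {x. c \<noteq> x} = A - {c}"
    by blast
  ultimately show ?thesis
    by simp
qed simp

lemma card_Int_less_if_ne:
  assumes "finite A" "finite B" "card A = m" "card B = m" "A \<noteq> B"
  shows "card (A \<inter> B) < m"
proof -
  have "card (A \<inter> B) \<le> m"
    using card_mono[OF assms(1) Int_lower1] assms(3) by simp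
  moreover have "card (A \<inter> B) \<noteq> m"
  proof
    assume "card (A \<inter> B) = m"
    then have "A \<inter> B = A" "A \<inter> B = B"
      using card_subset_eq[OF assms(1) Int_lower1, of B] card_subset_eq[OF assms(2) Int_lower2, of A]
        assms(3,4) by auto
    with assms(5) show False
      by simp
  qed
  ultimately show ?thesis
    by simp
qed

lemma sum_sum_if_eq:
  fixes X Y :: "'a::comm_ring_1"
  assumes "finite S"
  shows "(\<Sum>a\<in>S. \<Sum>b\<in>S. if a = b then X else Y) =
    of_nat (card S) * X + of_nat (card S) * (of_nat (card S) - 1) * Y"
proof -
  have row: "(\<Sum>b\<in>S. if a = b then X else Y) = of_nat (card S) * Y + (X - Y)" if "a \<in> S" for a
  proof -
    have "(\<Sum>b\<in>S. if a = b then X else Y) = (\<Sum>b\<in>S. Y + (if a = b then X - Y else 0))"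
      by (intro sum.cong) auto
    then show ?thesis
      using assms that by (simp add: sum.distrib)
  qed
  have "(\<Sum>a\<in>S. \<Sum>b\<in>S. if a = b then X else Y) = (\<Sum>a\<in>S. of_nat (card S) * Y + (X - Y))"
    by (intro sum.cong refl) (simp add: row)
  then show ?thesis
    by (simp add: algebra_simps)
qed

lemma sum_product_lower_bound:
  fixes u v w :: "'a \<Rightarrow> 'b \<Rightarrow> int"
  assumes u: "\<And>a b. u a b \<ge> M" "M \<ge> 0" and w: "\<And>a b. w a b \<ge> N" "N \<ge> 0"
    and v: "\<And>a b. v a b \<ge> c" "c \<ge> 0" "\<And>a. (\<Sum>b\<in>B. v a b) \<ge> int (card B) * c + d"
    and uw: "(\<Sum>a\<in>A. \<Sum>b\<in>B. u a b * w a b) \<ge> K"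
  shows "(\<Sum>a\<in>A. \<Sum>b\<in>B. u a b * v a b * w a b) \<ge> c * K + int (card A) * (M * N * d)"
proof -
  have pointwise: "u a b * w a b * (v a b - c) \<ge> M * N * (v a b - c)" for a b
    using u w v by (intro mult_right_mono mult_mono) (auto intro: order_trans)
  have "int (card A) * (M * N * d) = (\<Sum>a\<in>A. M * N * d)"
    by simp
  also have "\<dots> \<le> (\<Sum>a\<in>A. M * N * ((\<Sum>b\<in>B. v a b) - int (card B) * c))"
    using u w v by (intro sum_mono mult_left_mono mult_nonneg_nonneg) (auto simp: le_diff_eq add.commute)
  also have "\<dots> = (\<Sum>a\<in>A. \<Sum>b\<in>B. M * N * (v a b - c))"
    by (simp add: sum_distrib_left[symmetric] sum_subtractf)
  also have "\<dots> \<le> (\<Sum>a\<in>A. \<Sum>b\<in>B. u a b * w a b * (v a b - c))"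
    by (intro sum_mono pointwise)
  finally have "(\<Sum>a\<in>A. \<Sum>b\<in>B. u a b * w a b * (v a b - c)) \<ge> int (card A) * (M * N * d)" .
  moreover have "c * (\<Sum>a\<in>A. \<Sum>b\<in>B. u a b * w a b) \<ge> c * K"
    using uw v by (intro mult_left_mono) auto
  moreover have "(\<Sum>a\<in>A. \<Sum>b\<in>B. u a b * v a b * w a b) =
      c * (\<Sum>a\<in>A. \<Sum>b\<in>B. u a b * w a b) + (\<Sum>a\<in>A. \<Sum>b\<in>B. u a b * w a b * (v a b - c))"
    by (simp add: sum_distrib_left sum.distrib[symmetric] algebra_simps)
  ultimately show ?thesis
    by linarith
qed

section \<open>Colourings of a path with equal lists\<close>

(* path_eq m l and path_ne m l are the numbers of proper colourings, from a set of m colours,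
   of a path with l edges whose two ends carry prescribed equal resp. distinct colours:
   ((m - 1)^l + (m - 1) (-1)^l) / m and ((m - 1)^l - (-1)^l) / m. *)
fun path_ne :: "nat \<Rightarrow> nat \<Rightarrow> int" where
  "path_ne m 0 = 0"
| "path_ne m (Suc l) = (int m - 1) * path_ne m l + (if even l then 1 else -1)"

definition path_eq :: "nat \<Rightarrow> nat \<Rightarrow> int" where
  "path_eq m l = path_ne m l + (if even l then 1 else -1)"

lemma path_eq_Suc: "path_eq m (Suc l) = (int m - 1) * path_ne m l"
  by (simp add: path_eq_def)

lemma path_ne_ge_odd: "m \<ge> 2 \<Longrightarrow> path_ne m l \<ge> of_bool (odd l)"
proof (induction l)
  case (Suc l)
  then have "path_ne m l \<ge> 0"
    by (auto simp: of_bool_def split: if_splits)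
  then have "(int m - 1) * path_ne m l \<ge> path_ne m l"
    using Suc.prems mult_right_mono[of 1 "int m - 1" "path_ne m l"] by simp
  with Suc show ?case
    by (auto simp: of_bool_def split: if_splits)
qed simp

lemma path_ne_nonneg: "m \<ge> 2 \<Longrightarrow> path_ne m l \<ge> 0"
  using path_ne_ge_odd[of m l] by (auto simp: of_bool_def split: if_splits)

lemma path_eq_nonneg: "m \<ge> 2 \<Longrightarrow> path_eq m l \<ge> 0"
  using path_ne_ge_odd[of m l] by (auto simp: path_eq_def of_bool_def split: if_splits)

lemma path_ne_odd_ge:
  assumes m: "m \<ge> 3" and l: "odd l" "l \<ge> 3"
  shows "path_ne m l \<ge> int m"
proof -
  have "path_ne m (2 * j + 3) \<ge> int m" for j
  proof (induction j)
    case 0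
    have "path_ne m (2 * 0 + 3) = (int m - 1) * (int m - 2) + 1"
      by (simp add: numeral_3_eq_3 algebra_simps)
    moreover have "(int m - 1) * (int m - 2) \<ge> int m - 1"
      using m mult_left_mono[of 1 "int m - 2" "int m - 1"] by simp
    ultimately show ?case by linarith
  next
    case (Suc j)
    let ?b = "path_ne m (2 * j + 3)"
    have "path_ne m (2 * Suc j + 3) = ?b + (int m - 2) * (int m * ?b) - (int m - 2)"
      by (simp add: numeral_3_eq_3 algebra_simps)
    moreover have "int m * ?b \<ge> 1"
      using Suc m mult_mono[of 1 "int m" 1 ?b] by simp
    then have "(int m - 2) * (int m * ?b) \<ge> int m - 2"
      using m mult_left_mono[of 1 "int m * ?b" "int m - 2"] by simp
    ultimately show ?case using Suc by linarith
  qed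
  moreover have "l = 2 * (l div 2 - 1) + 3"
    using l by presburger
  ultimately show ?thesis by metis
qed

lemma path_ne_two: "path_ne 2 l = (if even l then 0 else 1)"
  by (induction l) auto

lemma path_eq_two: "path_eq 2 l = (if even l then 1 else 0)"
  by (simp add: path_eq_def path_ne_two)

lemma path_eq_one: "l \<ge> 1 \<Longrightarrow> path_eq 1 l = 0"
  by (cases l) (auto simp: path_eq_Suc)

section \<open>List colourings of paths\<close>

(* The number of proper colourings of the path v_0, ..., v_(k+1) with v_0 coloured a, v_(k+1)
   coloured c and each inner vertex v_j coloured from L j: k counts the inner vertices, so the
   path has k + 1 edges. *)
fun path_count :: "(nat \<Rightarrow> 'c set) \<Rightarrow> 'c \<Rightarrow> nat \<Rightarrow> 'c \<Rightarrow> nat" where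
  "path_count L a 0 c = of_bool (a \<noteq> c)"
| "path_count L a (Suc k) c = (\<Sum>x\<in>L (Suc k) - {c}. path_count L a k x)"

lemma path_count_cong:
  "(\<And>j. 1 \<le> j \<Longrightarrow> j \<le> k \<Longrightarrow> L j = L' j) \<Longrightarrow> path_count L a k c = path_count L' a k c"
  by (induction k arbitrary: c) auto

lemma path_count_split:
  "path_count L a (p + q + 1) c =
     (\<Sum>b\<in>L (p + 1). path_count L a p b * path_count (\<lambda>j. L (j + p + 1)) b q c)"
proof (induction q arbitrary: c)
  case 0
  show ?case
    using sum_of_bool_neq_mult[where A = "L (p + 1)" and c = c and f = "path_count L a p"]
    by (simp add: mult.commute eq_commute)
next
  case (Suc q)
  have "path_count L a (p + Suc q + 1) c =
      (\<Sum>x\<in>L (p + q + 2) - {c}. \<Sum>b\<in>L (p + 1). path_count L a p b * path_count (\<lambda>j. L (j + p + 1)) b q x)"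
    using Suc by simp
  also have "\<dots> = (\<Sum>b\<in>L (p + 1). path_count L a p b * path_count (\<lambda>j. L (j + p + 1)) b (Suc q) c)"
    by (subst sum.swap) (simp add: sum_distrib_left add.commute)
  finally show ?case .
qed

lemma path_count_cut:
  assumes "0 < s" "s \<le> k"
  shows "path_count L a k c =
    (\<Sum>b\<in>L s. path_count L a (s - 1) b * path_count (\<lambda>j. L (j + s)) b (k - s) c)"
  using path_count_split[of L a "s - 1" "k - s" c] assms by simp

lemma path_count_rev: "path_count L a k c = path_count (\<lambda>j. L (k + 1 - j)) c k a"
proof (induction k arbitrary: L a c)
  case (Suc k)
  have "path_count (\<lambda>j. L (Suc k + 1 - j)) c (0 + k + 1) a =
      (\<Sum>x\<in>L (Suc k). of_bool (c \<noteq> x) * path_count (\<lambda>j. L (k + 1 - j)) x k a)"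
    by (subst path_count_split) (simp cong: path_count_cong)
  also have "\<dots> = (\<Sum>x\<in>L (Suc k) - {c}. path_count L a k x)"
    by (simp add: Suc.IH[of L] sum_of_bool_neq_mult)
  finally show ?case by simp
qed simp

lemma path_count_const:
  assumes "finite S" "a \<in> S" "c \<in> S"
  shows "int (path_count (\<lambda>_. S) a k c) =
    (if a = c then path_eq (card S) (Suc k) else path_ne (card S) (Suc k))"
  using assms(3)
proof (induction k arbitrary: c)
  case 0
  then show ?case by (simp add: path_eq_def)
next
  case (Suc k)
  let ?A = "path_eq (card S) (Suc k)" and ?B = "path_ne (card S) (Suc k)"
  have "int (path_count (\<lambda>_. S) a (Suc k) c) = (\<Sum>x\<in>S - {c}. int (path_count (\<lambda>_. S) a k x))"
    by simp
  also have "\<dots> = (\<Sum>x\<in>S - {c}. ?B + (if x = a then ?A - ?B else 0))"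
    using Suc.IH by (intro sum.cong) auto
  also have "\<dots> = (int (card S) - 1) * ?B + (if a \<noteq> c then ?A - ?B else 0)"
  proof -
    have "card S > 0"
      using assms(1) Suc.prems card_gt_0_iff by blast
    then show ?thesis
      using assms Suc.prems by (simp add: sum.distrib card_Diff_singleton of_nat_diff del: path_ne.simps)
  qed
  finally show ?case
    by (auto simp: path_eq_def)
qed

lemma path_eq_add:
  assumes "m \<ge> 1" "p \<ge> 1" "q \<ge> 1"
  shows "path_eq m (p + q) =
    path_eq m p * path_eq m q + (int m - 1) * path_ne m p * path_ne m q"
proof -
  obtain p' q' where pq: "p = Suc p'" "q = Suc q'"
    using assms by (metis One_nat_def Suc_le_D)
  define S where "S = {0..<m}"
  have S: "finite S" "card S = m" "0 \<in> S"
    using assms by (auto simp: S_def)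
  have "path_eq m (p + q) = int (path_count (\<lambda>_. S) 0 (p' + q' + 1) 0)"
    using path_count_const[OF S(1) S(3) S(3), of "p' + q' + 1"] S(2) pq by (simp del: path_count.simps)
  also have "\<dots> = (\<Sum>b\<in>S. int (path_count (\<lambda>_. S) 0 p' b) * int (path_count (\<lambda>_. S) b q' 0))"
    using path_count_split[of "\<lambda>_. S" 0 p' q' 0] by (simp add: of_nat_sum del: path_count.simps)
  also have "\<dots> = (\<Sum>b\<in>S. if b = 0 then path_eq m p * path_eq m q else path_ne m p * path_ne m q)"
    using S pq by (intro sum.cong) (auto simp: path_count_const)
  also have "\<dots> = path_eq m p * path_eq m q + (int m - 1) * path_ne m p * path_ne m q"
    using S assms by (simp add: sum.remove card_Diff_singleton of_nat_diff)
  finally show ?thesis .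
qed

(* A lower bound for the number of colourings of a path with l edges and m-element lists whose
   last vertex takes one of t given colours; for t = 1 it is the smaller of path_eq m l and
   path_ne m l. *)
definition path_sum_bound :: "nat \<Rightarrow> nat \<Rightarrow> nat \<Rightarrow> int" where
  "path_sum_bound m l t =
    (if odd l then int t * path_ne m l - 1 else int t * path_ne m l + of_bool (t \<ge> m))"

(* The inductive step: by path_count_Suc_sum, the sum over t end colours at length l + 1 is
   (t - 1) S + R, where S and R are the sums at length l over the whole list and over the r list
   colours outside the given ones. *)
lemma path_sum_bound_step:
  assumes m: "m \<ge> 2" and t: "t \<ge> 1" and r: "m \<le> r + t" "r \<le> m"
    and R: "R \<ge> 0" "R \<ge> path_sum_bound m l r" and S: "S \<ge> path_sum_bound m l m"
    and B: "path_ne m l \<ge> 0"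
  shows "(int t - 1) * S + R \<ge> path_sum_bound m (Suc l) t"
proof -
  let ?B = "path_ne m l"
  have tS: "(int t - 1) * S \<ge> (int t - 1) * (int m * ?B + (if odd l then -1 else 1))"
    using S t by (intro mult_left_mono) (auto simp: path_sum_bound_def)
  show ?thesis
  proof (cases "t < m")
    case True
    then have "int r * ?B \<ge> (int m - int t) * ?B"
      using r B by (intro mult_right_mono) auto
    then show ?thesis
      using tS R True by (auto simp: path_sum_bound_def algebra_simps of_bool_def split: if_splits)
  next
    case False
    then have "int t * ?B \<ge> int m * ?B"
      using B by (intro mult_right_mono) auto
    then show ?thesis
      using tS R False by (auto simp: path_sum_bound_def algebra_simps split: if_splits)
  qed
qed

lemma path_count_Suc_sum:
  assumes "finite (L (Suc k))" "finite X"
  shows "int (\<Sum>x\<in>X. path_count L a (Suc k) x) =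
    (int (card X) - 1) * (\<Sum>y\<in>L (Suc k). int (path_count L a k y)) +
    (\<Sum>y\<in>L (Suc k) - X. int (path_count L a k y))"
proof -
  let ?L = "L (Suc k)" and ?f = "\<lambda>y. int (path_count L a k y)"
  have "int (\<Sum>x\<in>X. path_count L a (Suc k) x) = (\<Sum>x\<in>X. sum ?f ?L - (if x \<in> ?L then ?f x else 0))"
    unfolding of_nat_sum using assms(1) by (intro sum.cong) (auto simp: of_nat_sum sum_diff1)
  also have "\<dots> = int (card X) * sum ?f ?L - sum ?f (X \<inter> ?L)"
    using assms(2) by (simp add: sum_subtractf sum.inter_restrict)
  also have "\<dots> = (int (card X) - 1) * sum ?f ?L + sum ?f (?L - X)"
    using sum.Int_Diff[OF assms(1), of ?f X] by (simp add: Int_commute algebra_simps)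
  finally show ?thesis .
qed

lemma path_count_sum_ge:
  assumes m: "m \<ge> 2" and L: "is_m_assignment {1..k} m L" and X: "finite X"
  shows "int (\<Sum>x\<in>X. path_count L a k x) \<ge> path_sum_bound m (Suc k) (card X)"
  using L X
proof (induction k arbitrary: X)
  case 0
  have "card X \<le> card (X - {a}) + 1"
    using 0 by (cases "a \<in> X") (auto simp: card_Diff_singleton card_gt_0_iff)
  moreover have "X \<inter> {x. a \<noteq> x} = X - {a}"
    by blast
  ultimately show ?case
    using 0 by (simp add: path_sum_bound_def)
next
  case (Suc k)
  let ?L = "L (Suc k)" and ?f = "\<lambda>y. int (path_count L a k y)"
  have L': "finite ?L" "card ?L = m"
    using Suc.prems(1) by (auto simp: is_m_assignment_def)
  have IH: "finite Y \<Longrightarrow> sum ?f Y \<ge> path_sum_bound m (Suc k) (card Y)" for Y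
    using Suc.IH[of Y] Suc.prems(1) by (simp add: is_m_assignment_def of_nat_sum)
  show ?case
  proof (cases "X = {}")
    case False
    have "path_sum_bound m (Suc (Suc k)) (card X) \<le> (int (card X) - 1) * sum ?f ?L + sum ?f (?L - X)"
    proof (rule path_sum_bound_step[OF m])
      show "m \<le> card (?L - X) + card X"
        using diff_card_le_card_Diff[OF Suc.prems(2), of ?L] L' by linarith
      show "card (?L - X) \<le> m"
        using L' by (metis card_mono Diff_subset)
      show "sum ?f ?L \<ge> path_sum_bound m (Suc k) m"
        using IH[of ?L] L' by simp
      show "sum ?f (?L - X) \<ge> path_sum_bound m (Suc k) (card (?L - X))"
        using IH[of "?L - X"] L' by simp
    qed (use False Suc.prems(2) path_ne_nonneg[OF m] in
        \<open>auto intro: sum_nonneg simp: Suc_le_eq card_gt_0_iff simp del: path_ne.simps\<close>)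
    then show ?thesis
      using path_count_Suc_sum[where L = L and k = k, OF L'(1) Suc.prems(2)] by simp
  qed (use m in \<open>simp add: path_sum_bound_def\<close>)
qed

lemma path_count_ge:
  assumes "m \<ge> 2" "is_m_assignment {1..k} m L"
  shows "int (path_count L a k c) \<ge> (if odd (Suc k) then path_eq m (Suc k) else path_ne m (Suc k))"
  using path_count_sum_ge[OF assms, of "{c}" a] assms(1)
  by (auto simp: path_sum_bound_def path_eq_def of_bool_def simp del: path_ne.simps)

definition path_colourings :: "(nat \<Rightarrow> 'c set) \<Rightarrow> nat \<Rightarrow> 'c \<Rightarrow> 'c \<Rightarrow> (nat \<Rightarrow> 'c) set" where
  "path_colourings L l a b =
    {g \<in> extensional {0..l}. g 0 = a \<and> g l = b \<and> (\<forall>j\<in>{1..<l}. g j \<in> L j) \<and> (\<forall>j<l. g j \<noteq> g (Suc j))}"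

lemma path_colourings_one:
  "path_colourings L (Suc 0) a b = (if a \<noteq> b then {\<lambda>j\<in>{0..Suc 0}. if j = 0 then a else b} else {})"
proof -
  have "g = (\<lambda>j\<in>{0..Suc 0}. if j = 0 then a else b)"
    if "g \<in> extensional {0..Suc 0}" "g 0 = a" "g (Suc 0) = b" for g
    using that by (intro ext) (auto simp: extensional_def le_Suc_eq)
  then show ?thesis
    by (auto simp: path_colourings_def)
qed

lemma path_colourings_Suc:
  assumes "0 < k"
  shows "path_colourings L (Suc k) a b = (\<Union>x\<in>L k - {b}. (\<lambda>g. g(Suc k := b)) ` path_colourings L k a x)"
proof (intro equalityI subsetI)
  fix g
  assume g: "g \<in> path_colourings L (Suc k) a b"
  then have "g(Suc k := undefined) \<in> path_colourings L k a (g k)" "g k \<in> L k - {b}"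
    using assms by (auto simp: path_colourings_def extensional_def)
  moreover have "g = (g(Suc k := undefined))(Suc k := b)"
    using g by (auto simp: path_colourings_def)
  ultimately show "g \<in> (\<Union>x\<in>L k - {b}. (\<lambda>g. g(Suc k := b)) ` path_colourings L k a x)"
    by blast
next
  fix g
  assume "g \<in> (\<Union>x\<in>L k - {b}. (\<lambda>g. g(Suc k := b)) ` path_colourings L k a x)"
  then obtain x h where "x \<in> L k - {b}" "h \<in> path_colourings L k a x" "g = h(Suc k := b)"
    by blast
  then show "g \<in> path_colourings L (Suc k) a b"
    using assms by (auto simp: path_colourings_def extensional_def less_Suc_eq)
qed

lemma finite_path_colourings:
  "(\<And>j. 1 \<le> j \<Longrightarrow> j \<le> k \<Longrightarrow> finite (L j)) \<Longrightarrow> finite (path_colourings L (Suc k) a b)"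
  by (induction k arbitrary: b) (auto simp: path_colourings_one path_colourings_Suc)

lemma card_path_colourings:
  "(\<And>j. 1 \<le> j \<Longrightarrow> j \<le> k \<Longrightarrow> finite (L j)) \<Longrightarrow> card (path_colourings L (Suc k) a b) = path_count L a k b"
proof (induction k arbitrary: b)
  case 0
  then show ?case
    by (simp add: path_colourings_one)
next
  case (Suc k)
  have inj: "inj_on (\<lambda>g. g(Suc (Suc k) := b)) (path_colourings L (Suc k) a x)" for x
  proof (rule inj_onI, rule ext)
    fix g h j
    assume "g \<in> path_colourings L (Suc k) a x" "h \<in> path_colourings L (Suc k) a x"
      and "g(Suc (Suc k) := b) = h(Suc (Suc k) := b)"
    then show "g j = h j"
      by (cases "j = Suc (Suc k)")
        (auto simp: path_colourings_def extensional_def dest: fun_cong[of _ _ j])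
  qed
  have last: "g (Suc k) = x" if "g \<in> path_colourings L (Suc k) a x" for g x
    using that by (simp add: path_colourings_def)
  have "card (path_colourings L (Suc (Suc k)) a b) =
      (\<Sum>x\<in>L (Suc k) - {b}. card ((\<lambda>g. g(Suc (Suc k) := b)) ` path_colourings L (Suc k) a x))"
    unfolding path_colourings_Suc[OF zero_less_Suc]
    using Suc.prems by (intro card_UN_disjoint)
      (auto simp: finite_path_colourings last dest!: fun_cong[of _ _ "Suc k"])
  also have "\<dots> = path_count L a (Suc k) b"
    using Suc by (simp add: card_image[OF inj])
  finally show ?case .
qed

section \<open>List colourings of cycles\<close>

definition cycle_count :: "(nat \<Rightarrow> 'c set) \<Rightarrow> nat \<Rightarrow> nat" where
  "cycle_count C n = (\<Sum>a\<in>C 0. path_count C a (n - 1) a)"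

lemma cycle_count_rotate:
  assumes "0 < s" "s < n"
  shows "cycle_count C n = cycle_count (\<lambda>j. C ((j + s) mod n)) n"
proof -
  define D where "D = (\<lambda>j. C ((j + s) mod n))"
  have "D 0 = C s" "D (n - s) = C 0"
    using assms by (auto simp: D_def)
  moreover have "path_count D b (n - 1 - s) a = path_count (\<lambda>j. C (j + s)) b (n - 1 - s) a" for a b
    using assms by (intro path_count_cong) (simp add: D_def)
  moreover have "path_count (\<lambda>j. D (j + (n - s))) a (s - 1) b = path_count C a (s - 1) b" for a b
    using assms by (intro path_count_cong) (simp add: D_def)
  ultimately have "(\<Sum>a\<in>C 0. \<Sum>b\<in>C s. path_count C a (s - 1) b * path_count (\<lambda>j. C (j + s)) b (n - 1 - s) a) =
      (\<Sum>b\<in>D 0. \<Sum>a\<in>D (n - s). path_count D b (n - 1 - s) a * path_count (\<lambda>j. D (j + (n - s))) a (s - 1) b)"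
    by (subst sum.swap) (simp add: mult.commute)
  moreover have "cycle_count C n =
      (\<Sum>a\<in>C 0. \<Sum>b\<in>C s. path_count C a (s - 1) b * path_count (\<lambda>j. C (j + s)) b (n - 1 - s) a)"
    unfolding cycle_count_def using assms by (intro sum.cong refl path_count_cut) auto
  moreover have "cycle_count D n =
      (\<Sum>b\<in>D 0. \<Sum>a\<in>D (n - s). path_count D b (n - 1 - s) a * path_count (\<lambda>j. D (j + (n - s))) a (s - 1) b)"
  proof -
    have "n - 1 - (n - s) = s - 1"
      using assms by simp
    then show ?thesis
      unfolding cycle_count_def using assms path_count_cut[of "n - s" "n - 1" D]
      by (intro sum.cong refl) (simp add: add.commute)
  qed
  ultimately show ?thesis
    by (simp add: D_def)
qed

lemma cycle_count_const:
  assumes "finite S" "0 < n" "\<And>j. j < n \<Longrightarrow> C j = S"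
  shows "int (cycle_count C n) = int (card S) * path_eq (card S) n"
proof -
  have "int (path_count C a (n - 1) a) = path_eq (card S) n" if "a \<in> S" for a
  proof -
    have "path_count C a (n - 1) a = path_count (\<lambda>_. S) a (n - 1) a"
      using assms by (intro path_count_cong) auto
    then show ?thesis
      using path_count_const[OF assms(1) that that, of "n - 1"] assms(2) by simp
  qed
  then show ?thesis
    using assms by (simp add: cycle_count_def of_nat_sum)
qed

lemma cycle_count_ge_if_ends_differ:
  assumes m: "m \<ge> 3" and n: "n \<ge> 4" "even n" and C: "is_m_assignment {..<n} m C"
    and ends: "C 0 \<noteq> C (n - 1)"
  shows "int (cycle_count C n) \<ge> int m * path_eq m n"
proof -
  define B where "B = path_ne m (n - 1)"
  have B: "B \<ge> int m"
    unfolding B_def using path_ne_odd_ge m n by simp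
  have C0: "finite (C 0)" "card (C 0) = m" and Cn: "finite (C (n - 1))" "card (C (n - 1)) = m"
    using C n by (auto simp: is_m_assignment_def)
  obtain k where k: "n = Suc (Suc k)"
    using n by (intro that[of "n - 2"]) simp
  have row: "int (path_count C b (n - 1) b) \<ge> (int m - of_bool (b \<in> C (n - 1))) * B - 1" for b
  proof -
    have "int (\<Sum>x\<in>C (Suc k) - {b}. path_count C b k x) \<ge> path_sum_bound m (Suc k) (card (C (Suc k) - {b}))"
      using C Cn m k by (intro path_count_sum_ge) (auto simp: is_m_assignment_def)
    moreover have "odd (Suc k)"
      using n k by simp
    moreover have "int (card (C (Suc k) - {b})) = int m - of_bool (b \<in> C (Suc k))"
      using Cn k m by (simp add: card_Diff_singleton_if of_nat_diff)
    ultimately show ?thesis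
      by (simp add: k B_def path_sum_bound_def del: path_ne.simps)
  qed
  have "card (C 0 \<inter> C (n - 1)) \<le> m - 1"
    using card_Int_less_if_ne[OF C0(1) Cn(1) C0(2) Cn(2) ends] by linarith
  then have common: "int (card (C 0 \<inter> C (n - 1))) * B \<le> (int m - 1) * B"
    using B m by (intro mult_right_mono) auto
  have "int m * (int m * B - 1) - int (card (C 0 \<inter> C (n - 1))) * B =
      (\<Sum>b\<in>C 0. (int m * B - 1) - of_bool (b \<in> C (n - 1)) * B)"
    using C0 by (simp add: sum_subtractf sum_distrib_right[symmetric])
  also have "\<dots> \<le> int (cycle_count C n)"
    unfolding cycle_count_def of_nat_sum using row by (intro sum_mono) (simp add: algebra_simps)
  finally have "int (cycle_count C n) \<ge> int m * ((int m - 1) * B) + (B - int m)"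
    using common by (simp add: algebra_simps)
  moreover have "path_eq m n = (int m - 1) * B"
    using path_eq_Suc[of m "n - 1"] n by (simp add: B_def)
  ultimately show ?thesis
    using B by simp
qed

lemma even_cycle_count_ge:
  assumes m: "m \<ge> 3" and n: "n \<ge> 4" "even n" and C: "is_m_assignment {..<n} m C"
  shows "int (cycle_count C n) \<ge> int m * path_eq m n"
proof (cases "\<forall>j<n. C j = C 0")
  case True
  have "finite (C 0)" "card (C 0) = m"
    using C n by (auto simp: is_m_assignment_def)
  then show ?thesis
    using cycle_count_const[of "C 0" n C, OF _ _ True[rule_format]] n by simp
next
  case False
  obtain s where s: "Suc s < n" "C s \<noteq> C (Suc s)"
  proof (rule ccontr)
    assume "\<not> thesis"
    then have "Suc j < n \<Longrightarrow> C (Suc j) = C j" for j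
      using that by blast
    then have "j < n \<Longrightarrow> C j = C 0" for j
      by (induction j) auto
    with False show False
      by blast
  qed
  define D where "D = (\<lambda>j. C ((j + Suc s) mod n))"
  have "cycle_count C n = cycle_count D n"
    unfolding D_def using s by (intro cycle_count_rotate) auto
  moreover have "int (cycle_count D n) \<ge> int m * path_eq m n"
  proof (rule cycle_count_ge_if_ends_differ[OF m n])
    show "is_m_assignment {..<n} m D"
      using C n by (simp add: is_m_assignment_def D_def)
    have "n - 1 + Suc s = s + n"
      using s by simp
    then have "(n - 1 + Suc s) mod n = s"
      using s by simp
    then show "D 0 \<noteq> D (n - 1)"
      using s by (simp add: D_def)
  qed
  ultimately show ?thesis
    by simp
qed

lemma cycle_count_two_paths:
  assumes "0 < p" "0 < q"
  shows "(\<Sum>a\<in>U. \<Sum>b\<in>W. path_count P a (p - 1) b * path_count Q a (q - 1) b) =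
    cycle_count (\<lambda>j. if j = 0 then U else if j < p then P j else if j = p then W else Q (p + q - j))
      (p + q)"
    (is "_ = cycle_count ?C _")
proof -
  have "path_count ?C a (p + q - 1) a = (\<Sum>b\<in>W. path_count P a (p - 1) b * path_count Q a (q - 1) b)" for a
  proof -
    have "path_count ?C a (p - 1) b = path_count P a (p - 1) b" for b
      by (intro path_count_cong) auto
    moreover have "path_count (\<lambda>j. ?C (j + p)) b (q - 1) a = path_count Q a (q - 1) b" for b
    proof -
      have "path_count (\<lambda>j. ?C (j + p)) b (q - 1) a = path_count (\<lambda>j. Q (q - 1 + 1 - j)) b (q - 1) a"
        using assms by (intro path_count_cong) auto
      then show ?thesis
        by (simp add: path_count_rev[of Q])
    qed
    ultimately show ?thesis
      using path_count_cut[of p "p + q - 1" ?C a a] assms by simp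
  qed
  then show ?thesis
    by (simp add: cycle_count_def)
qed

section \<open>Theta graphs\<close>

lemma theta_pt_first [simp]: "theta_pt l1 l2 l3 i 0 = (0, 0)"
  by (simp add: theta_pt_def)

lemma theta_pt_last [simp]:
  "theta_len l1 l2 l3 i \<noteq> 0 \<Longrightarrow> theta_pt l1 l2 l3 i (theta_len l1 l2 l3 i) = (0, 1)"
  by (simp add: theta_pt_def)

lemma theta_pt_inner: "0 < j \<Longrightarrow> j < theta_len l1 l2 l3 i \<Longrightarrow> theta_pt l1 l2 l3 i j = (i, j)"
  by (simp add: theta_pt_def)

lemma theta_pt_in_V: "i \<in> {1, 2, 3} \<Longrightarrow> j \<le> theta_len l1 l2 l3 i \<Longrightarrow> theta_pt l1 l2 l3 i j \<in> theta_V l1 l2 l3"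
  by (auto simp: theta_V_def)

lemma theta_ends_in_V:
  assumes "l1 \<noteq> 0"
  shows "(0, 0) \<in> theta_V l1 l2 l3" "(0, 1) \<in> theta_V l1 l2 l3"
  using theta_pt_in_V[of 1 0 l1 l2 l3] theta_pt_in_V[of 1 l1 l1 l2 l3] assms
  by (simp_all add: theta_len_def theta_pt_def)

lemma theta_inner_in_V: "i \<in> {1, 2, 3} \<Longrightarrow> 0 < j \<Longrightarrow> j < theta_len l1 l2 l3 i \<Longrightarrow> (i, j) \<in> theta_V l1 l2 l3"
  using theta_pt_in_V[of i j l1 l2 l3] by (simp add: theta_pt_inner)

lemma proper_col_theta_iff:
  "proper_col (theta_E l1 l2 l3) f \<longleftrightarrow>
    (\<forall>i\<in>{1, 2, 3}. \<forall>j<theta_len l1 l2 l3 i. f (theta_pt l1 l2 l3 i j) \<noteq> f (theta_pt l1 l2 l3 i (Suc j)))"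
    (is "_ \<longleftrightarrow> ?paths")
proof
  assume "proper_col (theta_E l1 l2 l3) f"
  then show ?paths
    unfolding proper_col_def theta_E_def Let_def by blast
next
  assume ?paths
  then have "f x \<noteq> f y" "f y \<noteq> f x"
    if "(x, y) \<in> {(theta_pt l1 l2 l3 i j, theta_pt l1 l2 l3 i (Suc j)) | i j.
      i \<in> {1, 2, 3} \<and> j < theta_len l1 l2 l3 i}" for x y
    using that by auto
  then show "proper_col (theta_E l1 l2 l3) f"
    unfolding proper_col_def theta_E_def Let_def by blast
qed

definition theta_colourings :: "nat \<Rightarrow> nat \<Rightarrow> nat \<Rightarrow> (nat \<times> nat \<Rightarrow> nat set) \<Rightarrow> (nat \<times> nat \<Rightarrow> nat) set"
  where "theta_colourings l1 l2 l3 L = {f \<in> PiE (theta_V l1 l2 l3) L. proper_col (theta_E l1 l2 l3) f}"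

definition theta_path_colourings ::
  "nat \<Rightarrow> nat \<Rightarrow> nat \<Rightarrow> (nat \<times> nat \<Rightarrow> 'c set) \<Rightarrow> ('c \<times> 'c \<times> (nat \<Rightarrow> nat \<Rightarrow> 'c)) set"
  where "theta_path_colourings l1 l2 l3 L = (SIGMA a:L (0, 0). SIGMA b:L (0, 1).
    PiE {1, 2, 3} (\<lambda>i. path_colourings (\<lambda>j. L (i, j)) (theta_len l1 l2 l3 i) a b))"

definition theta_restrict :: "nat \<Rightarrow> nat \<Rightarrow> nat \<Rightarrow> (nat \<times> nat \<Rightarrow> 'c) \<Rightarrow> 'c \<times> 'c \<times> (nat \<Rightarrow> nat \<Rightarrow> 'c)"
  where "theta_restrict l1 l2 l3 f =
    (f (0, 0), f (0, 1), \<lambda>i\<in>{1, 2, 3}. \<lambda>j\<in>{0..theta_len l1 l2 l3 i}. f (theta_pt l1 l2 l3 i j))"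

definition theta_glue :: "nat \<Rightarrow> nat \<Rightarrow> nat \<Rightarrow> 'c \<times> 'c \<times> (nat \<Rightarrow> nat \<Rightarrow> 'c) \<Rightarrow> nat \<times> nat \<Rightarrow> 'c"
  where "theta_glue l1 l2 l3 = (\<lambda>(a, b, G).
    \<lambda>v\<in>theta_V l1 l2 l3. if v = (0, 0) then a else if v = (0, 1) then b else G (fst v) (snd v))"

lemma theta_restrict_mem:
  assumes f: "f \<in> theta_colourings l1 l2 l3 L" and l: "\<And>i. theta_len l1 l2 l3 i \<noteq> 0"
  shows "theta_restrict l1 l2 l3 f \<in> theta_path_colourings l1 l2 l3 L"
proof -
  have f_col: "f \<in> PiE (theta_V l1 l2 l3) L" "proper_col (theta_E l1 l2 l3) f"
    using f by (simp_all add: theta_colourings_def)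
  have "f (i, j) \<in> L (i, j)" if "i \<in> {1, 2, 3}" "j \<in> {1..<theta_len l1 l2 l3 i}" for i j
    using PiE_mem[OF f_col(1) theta_inner_in_V] that by simp
  moreover have "f (0, 0) \<in> L (0, 0)" "f (0, 1) \<in> L (0, 1)"
    using PiE_mem[OF f_col(1) theta_ends_in_V(1)] PiE_mem[OF f_col(1) theta_ends_in_V(2)] l[of 1]
    by (simp_all add: theta_len_def)
  ultimately show ?thesis
    using f_col(2) l unfolding proper_col_theta_iff path_colourings_def theta_restrict_def theta_path_colourings_def
    by (auto simp: theta_pt_inner)
qed

lemma theta_glue_pt:
  assumes "i \<in> {1, 2, 3}" "j \<le> theta_len l1 l2 l3 i" "theta_len l1 l2 l3 i \<noteq> 0"
    and "G i 0 = a" "G i (theta_len l1 l2 l3 i) = b"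
  shows "theta_glue l1 l2 l3 (a, b, G) (theta_pt l1 l2 l3 i j) = G i j"
  using assms theta_pt_in_V[OF assms(1,2)]
  by (auto simp: theta_glue_def theta_pt_def)

lemma theta_glue_mem:
  assumes l: "\<And>i. theta_len l1 l2 l3 i \<noteq> 0" and t: "(a, b, G) \<in> theta_path_colourings l1 l2 l3 L"
  shows "theta_glue l1 l2 l3 (a, b, G) \<in> theta_colourings l1 l2 l3 L"
proof -
  have a: "a \<in> L (0, 0)" and b: "b \<in> L (0, 1)"
    and G: "\<And>i. i \<in> {1, 2, 3} \<Longrightarrow> G i \<in> path_colourings (\<lambda>j. L (i, j)) (theta_len l1 l2 l3 i) a b"
    using t by (auto simp: theta_path_colourings_def)
  have G_ends: "G i 0 = a" "G i (theta_len l1 l2 l3 i) = b" if "i \<in> {1, 2, 3}" for i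
    using G[OF that] by (simp_all add: path_colourings_def)
  have "theta_glue l1 l2 l3 (a, b, G) v \<in> L v" if v: "v \<in> theta_V l1 l2 l3" for v
  proof -
    obtain i j where ij: "i \<in> {1, 2, 3}" "j \<le> theta_len l1 l2 l3 i" "v = theta_pt l1 l2 l3 i j"
      using v unfolding theta_V_def by blast
    then have "G i j \<in> L (theta_pt l1 l2 l3 i j)"
      using G[OF ij(1)] a b by (auto simp: path_colourings_def theta_pt_def)
    then show ?thesis
      using theta_glue_pt[where G = G, OF ij(1,2) l G_ends[OF ij(1)]] ij(3) by simp
  qed
  then have "theta_glue l1 l2 l3 (a, b, G) \<in> PiE (theta_V l1 l2 l3) L"
    by (intro PiE_I) (simp_all add: theta_glue_def)
  moreover have "proper_col (theta_E l1 l2 l3) (theta_glue l1 l2 l3 (a, b, G))"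
    unfolding proper_col_theta_iff
  proof (intro ballI allI impI)
    fix i j
    assume i: "i \<in> {1, 2, 3}" and j: "j < theta_len l1 l2 l3 i"
    then have "G i j \<noteq> G i (Suc j)"
      using G[OF i] by (simp add: path_colourings_def)
    then show "theta_glue l1 l2 l3 (a, b, G) (theta_pt l1 l2 l3 i j) \<noteq>
        theta_glue l1 l2 l3 (a, b, G) (theta_pt l1 l2 l3 i (Suc j))"
      using theta_glue_pt[where G = G, OF i _ l G_ends[OF i]] j by simp
  qed
  ultimately show ?thesis
    by (simp add: theta_colourings_def)
qed

lemma theta_glue_restrict:
  assumes f: "f \<in> PiE (theta_V l1 l2 l3) L" and l: "\<And>i. theta_len l1 l2 l3 i \<noteq> 0"
  shows "theta_glue l1 l2 l3 (theta_restrict l1 l2 l3 f) = f"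
proof
  fix v
  show "theta_glue l1 l2 l3 (theta_restrict l1 l2 l3 f) v = f v"
  proof (cases "v \<in> theta_V l1 l2 l3")
    case True
    then obtain i j where ij: "i \<in> {1, 2, 3}" "j \<le> theta_len l1 l2 l3 i" "v = theta_pt l1 l2 l3 i j"
      unfolding theta_V_def by blast
    then show ?thesis
      using theta_glue_pt[where G = "\<lambda>i\<in>{1, 2, 3}. \<lambda>j\<in>{0..theta_len l1 l2 l3 i}. f (theta_pt l1 l2 l3 i j)",
          OF ij(1,2) l] l[of i]
      by (simp add: theta_restrict_def)
  next
    case False
    then show ?thesis
      using PiE_arb[OF f False] by (simp add: theta_glue_def theta_restrict_def)
  qed
qed

lemma theta_restrict_glue:
  assumes l: "\<And>i. theta_len l1 l2 l3 i \<noteq> 0" and t: "(a, b, G) \<in> theta_path_colourings l1 l2 l3 L"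
  shows "theta_restrict l1 l2 l3 (theta_glue l1 l2 l3 (a, b, G)) = (a, b, G)"
proof -
  have G: "G \<in> PiE {1, 2, 3} (\<lambda>i. path_colourings (\<lambda>j. L (i, j)) (theta_len l1 l2 l3 i) a b)"
    using t by (simp add: theta_path_colourings_def)
  have "(\<lambda>i\<in>{1, 2, 3}. \<lambda>j\<in>{0..theta_len l1 l2 l3 i}.
      theta_glue l1 l2 l3 (a, b, G) (theta_pt l1 l2 l3 i j)) = G"
  proof (intro ext)
    fix i j
    show "(\<lambda>i\<in>{1, 2, 3}. \<lambda>j\<in>{0..theta_len l1 l2 l3 i}.
        theta_glue l1 l2 l3 (a, b, G) (theta_pt l1 l2 l3 i j)) i j = G i j"
    proof (cases "i \<in> {1, 2, 3}")
      case True
      then have "G i \<in> path_colourings (\<lambda>j. L (i, j)) (theta_len l1 l2 l3 i) a b"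
        using G by blast
      then have "G i 0 = a" "G i (theta_len l1 l2 l3 i) = b" "G i \<in> extensional {0..theta_len l1 l2 l3 i}"
        unfolding path_colourings_def by blast+
      then show ?thesis
        using True theta_glue_pt[where G = G, OF True _ l] extensional_arb[of "G i"] by simp
    next
      case False
      then show ?thesis
        using PiE_arb[OF G False] by simp
    qed
  qed
  moreover have "theta_glue l1 l2 l3 (a, b, G) (0, 0) = a" "theta_glue l1 l2 l3 (a, b, G) (0, 1) = b"
    using theta_ends_in_V[of l1 l2 l3] l[of 1] by (simp_all add: theta_glue_def theta_len_def)
  ultimately show ?thesis
    by (simp add: theta_restrict_def)
qed

lemma theta_restrict_bij:
  assumes l: "\<And>i. theta_len l1 l2 l3 i \<noteq> 0"
  shows "bij_betw (theta_restrict l1 l2 l3) (theta_colourings l1 l2 l3 L) (theta_path_colourings l1 l2 l3 L)"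
proof (rule bij_betw_byWitness[where f' = "theta_glue l1 l2 l3"])
  show "\<forall>f\<in>theta_colourings l1 l2 l3 L. theta_glue l1 l2 l3 (theta_restrict l1 l2 l3 f) = f"
    using theta_glue_restrict[OF _ l] unfolding theta_colourings_def by blast
qed (use theta_restrict_mem[OF _ l] theta_glue_mem[OF l] theta_restrict_glue[OF l] in auto)

definition theta_path_count :: "nat \<Rightarrow> nat \<Rightarrow> nat \<Rightarrow> (nat \<times> nat \<Rightarrow> 'c set) \<Rightarrow> nat \<Rightarrow> 'c \<Rightarrow> 'c \<Rightarrow> nat" where
  "theta_path_count l1 l2 l3 L i a b = path_count (\<lambda>j. L (i, j)) a (theta_len l1 l2 l3 i - 1) b"

lemma num_list_col_theta:
  assumes l: "l1 \<ge> 1" "l2 \<ge> 1" "l3 \<ge> 1" and fin: "\<And>v. v \<in> theta_V l1 l2 l3 \<Longrightarrow> finite (L v)"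
  shows "num_list_col (theta_V l1 l2 l3) (theta_E l1 l2 l3) L =
    (\<Sum>a\<in>L (0, 0). \<Sum>b\<in>L (0, 1). \<Prod>i\<in>{1, 2, 3}. theta_path_count l1 l2 l3 L i a b)"
proof -
  let ?len = "theta_len l1 l2 l3"
  let ?P = "\<lambda>a b i. path_colourings (\<lambda>j. L (i, j)) (?len i) a b"
  have len: "?len i \<noteq> 0" for i
    using l by (simp add: theta_len_def)
  have "finite (L (i, j))" if "i \<in> {1, 2, 3}" "1 \<le> j" "j \<le> ?len i - 1" for i j
    using fin theta_inner_in_V[of i j l1 l2 l3] that by simp
  then have "finite (?P a b i)" "card (?P a b i) = theta_path_count l1 l2 l3 L i a b"
    if "i \<in> {1, 2, 3}" for a b i
    using finite_path_colourings[of "?len i - 1" "\<lambda>j. L (i, j)"]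
      card_path_colourings[of "?len i - 1" "\<lambda>j. L (i, j)"] len[of i] that
    by (simp_all add: theta_path_count_def)
  then have "finite (PiE {1, 2, 3} (?P a b))"
    "card (PiE {1, 2, 3} (?P a b)) = (\<Prod>i\<in>{1, 2, 3}. theta_path_count l1 l2 l3 L i a b)" for a b
    by (simp_all add: finite_PiE card_PiE del: insert_iff)
  moreover have "finite (L (0, 0))" "finite (L (0, 1))"
    using fin theta_ends_in_V l by simp_all
  moreover have "num_list_col (theta_V l1 l2 l3) (theta_E l1 l2 l3) L = card (theta_path_colourings l1 l2 l3 L)"
    unfolding num_list_col_def theta_colourings_def[symmetric] using theta_restrict_bij[OF len]
    by (rule bij_betw_same_card)
  ultimately show ?thesis
    by (simp add: theta_path_colourings_def)
qed

lemma chrom_poly_theta: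
  assumes "l1 \<ge> 1" "l2 \<ge> 1" "l3 \<ge> 1"
  shows "int (chrom_poly (theta_V l1 l2 l3) (theta_E l1 l2 l3) m) =
    int m * (path_eq m l1 * path_eq m l2 * path_eq m l3) +
    int m * (int m - 1) * (path_ne m l1 * path_ne m l2 * path_ne m l3)"
proof -
  have path: "int (path_count (\<lambda>_. {1..m}) a (l - 1) b) = (if a = b then path_eq m l else path_ne m l)"
    if "a \<in> {1..m}" "b \<in> {1..m}" "l \<ge> 1" for a b l
    using path_count_const[of "{1..m}" a b "l - 1"] that by simp
  have "int (chrom_poly (theta_V l1 l2 l3) (theta_E l1 l2 l3) m) =
      (\<Sum>a\<in>{1..m}. \<Sum>b\<in>{1..m}. \<Prod>i\<in>{1, 2, 3}. int (theta_path_count l1 l2 l3 (\<lambda>_. {1..m}) i a b))"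
    unfolding chrom_poly_def using num_list_col_theta[OF assms, of "\<lambda>_. {1..m}"] by (simp add: of_nat_sum)
  also have "\<dots> = (\<Sum>a\<in>{1..m}. \<Sum>b\<in>{1..m}. if a = b then path_eq m l1 * path_eq m l2 * path_eq m l3
        else path_ne m l1 * path_ne m l2 * path_ne m l3)"
    using path assms by (intro sum.cong refl) (simp add: theta_path_count_def theta_len_def)
  finally show ?thesis
    by (simp add: sum_sum_if_eq)
qed

lemma chrom_poly_theta_eq_0:
  assumes l: "l1 \<ge> 1" "l2 \<ge> 1" "l3 \<ge> 1" and parity: "\<not> (even l1 \<longleftrightarrow> even l2)" and m: "m \<le> 2"
  shows "chrom_poly (theta_V l1 l2 l3) (theta_E l1 l2 l3) m = 0"
proof -
  consider "m = 0" | "m = 1" | "m = 2"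
    using m by linarith
  then have "int m * (path_eq m l1 * path_eq m l2 * path_eq m l3) +
      int m * (int m - 1) * (path_ne m l1 * path_ne m l2 * path_ne m l3) = 0"
  proof cases
    case 2
    then show ?thesis
      using path_eq_one[OF l(1)] by simp
  next
    case 3
    then show ?thesis
      using parity by (cases "even l1") (simp_all add: path_eq_two path_ne_two)
  qed simp
  then show ?thesis
    using chrom_poly_theta[OF l, of m] by simp
qed

lemma theta_path_count_ge:
  assumes l: "l1 \<ge> 1" "l2 \<ge> 1" "l3 \<ge> 1" and m: "m \<ge> 2" and L: "is_m_assignment (theta_V l1 l2 l3) m L"
    and i: "i \<in> {1, 2, 3}" "theta_len l1 l2 l3 i = l"
  shows "int (theta_path_count l1 l2 l3 L i a b) \<ge> (if odd l then path_eq m l else path_ne m l)"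
    and "(\<Sum>b\<in>L (0, 1). int (theta_path_count l1 l2 l3 L i a b)) \<ge>
      int m * path_ne m l + (if odd l then -1 else 1)"
proof -
  have path: "is_m_assignment {1..l - 1} m (\<lambda>j. L (i, j))"
    using L theta_inner_in_V[OF i(1)] i(2) by (auto simp: is_m_assignment_def)
  have len: "Suc (l - 1) = l"
    using l i(2) by (auto simp: theta_len_def)
  have "finite (L (0, 1))" "card (L (0, 1)) = m"
    using L theta_ends_in_V[of l1 l2 l3] l by (auto simp: is_m_assignment_def)
  then show "(\<Sum>b\<in>L (0, 1). int (theta_path_count l1 l2 l3 L i a b)) \<ge>
      int m * path_ne m l + (if odd l then -1 else 1)"
    using path_count_sum_ge[OF m path, of "L (0, 1)" a] i(2) unfolding len
    by (simp add: theta_path_count_def of_nat_sum path_sum_bound_def split: if_splits)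
  show "int (theta_path_count l1 l2 l3 L i a b) \<ge> (if odd l then path_eq m l else path_ne m l)"
    using path_count_ge[OF m path, of a b] i(2) unfolding len by (simp add: theta_path_count_def)
qed

lemma theta_outer_cycle_ge:
  assumes l: "l1 \<ge> 1" "l3 \<ge> 1" "l1 + l3 \<ge> 4" "even (l1 + l3)"
    and m: "m \<ge> 3" and L: "is_m_assignment (theta_V l1 l2 l3) m L"
  shows "(\<Sum>a\<in>L (0, 0). \<Sum>b\<in>L (0, 1).
      int (theta_path_count l1 l2 l3 L 1 a b) * int (theta_path_count l1 l2 l3 L 3 a b))
    \<ge> int m * path_eq m (l1 + l3)"
proof -
  let ?C = "\<lambda>j. if j = 0 then L (0, 0) else if j < l1 then L (1, j) else if j = l1 then L (0, 1)
    else L (3, l1 + l3 - j)"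
  have "is_m_assignment {..<l1 + l3} m ?C"
    using L l theta_ends_in_V[of l1 l2 l3] theta_inner_in_V[of 1 _ l1 l2 l3] theta_inner_in_V[of 3 _ l1 l2 l3]
    by (auto simp: is_m_assignment_def theta_len_def)
  then have "int (cycle_count ?C (l1 + l3)) \<ge> int m * path_eq m (l1 + l3)"
    using even_cycle_count_ge m l by blast
  moreover have "(\<Sum>a\<in>L (0, 0). \<Sum>b\<in>L (0, 1).
      theta_path_count l1 l2 l3 L 1 a b * theta_path_count l1 l2 l3 L 3 a b)
      = cycle_count ?C (l1 + l3)"
  proof -
    have len: "theta_len l1 l2 l3 1 = l1" "theta_len l1 l2 l3 3 = l3"
      by (simp_all add: theta_len_def)
    show ?thesis
      unfolding theta_path_count_def len using l by (intro cycle_count_two_paths) auto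
  qed
  ultimately show ?thesis
    by (metis (no_types, lifting) of_nat_mult of_nat_sum sum.cong)
qed

lemma sum_path_products_ge:
  fixes w1 w2 w3 :: "'a \<Rightarrow> 'b \<Rightarrow> int"
  assumes l: "l1 \<ge> 1" "l3 \<ge> 1" and parity: "even l1 \<longleftrightarrow> even l3" "\<not> (even l1 \<longleftrightarrow> even l2)"
    and m: "m \<ge> 2" "card U = m" "card W = m"
    and w1: "\<And>a b. w1 a b \<ge> (if odd l1 then path_eq m l1 else path_ne m l1)"
    and w2: "\<And>a b. w2 a b \<ge> (if odd l2 then path_eq m l2 else path_ne m l2)"
    and w3: "\<And>a b. w3 a b \<ge> (if odd l3 then path_eq m l3 else path_ne m l3)"
    and row: "\<And>a. (\<Sum>b\<in>W. w2 a b) \<ge> int m * path_ne m l2 + (if odd l2 then -1 else 1)"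
    and cycle: "(\<Sum>a\<in>U. \<Sum>b\<in>W. w1 a b * w3 a b) \<ge> int m * path_eq m (l1 + l3)"
  shows "(\<Sum>a\<in>U. \<Sum>b\<in>W. w1 a b * w2 a b * w3 a b) \<ge>
    int m * (path_eq m l1 * path_eq m l2 * path_eq m l3) +
    int m * (int m - 1) * (path_ne m l1 * path_ne m l2 * path_ne m l3)"
proof -
  define A B where "A = path_eq m" and "B = path_ne m"
  define K where "K = int m * (A l1 * A l3 + (int m - 1) * B l1 * B l3)"
  have cycle': "(\<Sum>a\<in>U. \<Sum>b\<in>W. w1 a b * w3 a b) \<ge> K"
    using cycle path_eq_add[of m l1 l3] l m by (simp add: K_def A_def B_def)
  have nonneg: "A l \<ge> 0" "B l \<ge> 0" for l
    using m path_eq_nonneg path_ne_nonneg by (simp_all add: A_def B_def)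
  show ?thesis
  proof (cases "odd l1")
    case True
    with parity have "odd l3" "even l2"
      by auto
    then have AB2: "A l2 = B l2 + 1"
      by (simp add: A_def B_def path_eq_def)
    have "(\<Sum>a\<in>U. \<Sum>b\<in>W. w1 a b * w2 a b * w3 a b) \<ge> B l2 * K + int (card U) * (A l1 * A l3 * 1)"
      using True \<open>odd l3\<close> \<open>even l2\<close> w1 w2 w3 row cycle' nonneg m
      by (intro sum_product_lower_bound) (auto simp: A_def B_def)
    then show ?thesis
      unfolding m(2) by (simp add: K_def AB2 A_def[symmetric] B_def[symmetric] algebra_simps)
  next
    case False
    with parity have "even l3" "odd l2"
      by auto
    then have AB2: "B l2 = A l2 + 1"
      by (simp add: A_def B_def path_eq_def)
    have "(\<Sum>a\<in>U. \<Sum>b\<in>W. w1 a b * w2 a b * w3 a b) \<ge> A l2 * K + int (card U) * (B l1 * B l3 * (int m - 1))"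
      using False \<open>even l3\<close> \<open>odd l2\<close> w1 w2 w3 row cycle' nonneg m
      by (intro sum_product_lower_bound) (auto simp: A_def B_def AB2[unfolded A_def B_def] algebra_simps)
    then show ?thesis
      unfolding m(2) by (simp add: K_def AB2 A_def[symmetric] B_def[symmetric] algebra_simps)
  qed
qed

lemma chrom_poly_theta_le_num_list_col:
  assumes l: "l1 \<ge> 1" "l2 \<ge> 1" "l3 \<ge> 1" "l1 + l3 \<ge> 4"
    and parity: "even l1 \<longleftrightarrow> even l3" "\<not> (even l1 \<longleftrightarrow> even l2)"
    and m: "m \<ge> 3" and L: "is_m_assignment (theta_V l1 l2 l3) m L"
  shows "chrom_poly (theta_V l1 l2 l3) (theta_E l1 l2 l3) m \<le>
    num_list_col (theta_V l1 l2 l3) (theta_E l1 l2 l3) L"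
proof -
  define w where "w i a b = int (theta_path_count l1 l2 l3 L i a b)" for i a b
  have len: "theta_len l1 l2 l3 1 = l1" "theta_len l1 l2 l3 2 = l2" "theta_len l1 l2 l3 3 = l3"
    by (simp_all add: theta_len_def)
  have "card (L (0, 0)) = m" "card (L (0, 1)) = m"
    using L theta_ends_in_V[of l1 l2 l3] l by (auto simp: is_m_assignment_def)
  then have "(\<Sum>a\<in>L (0, 0). \<Sum>b\<in>L (0, 1). w 1 a b * w 2 a b * w 3 a b) \<ge>
      int m * (path_eq m l1 * path_eq m l2 * path_eq m l3) +
      int m * (int m - 1) * (path_ne m l1 * path_ne m l2 * path_ne m l3)"
    using l parity m theta_outer_cycle_ge[OF l(1,3,4) _ m L]
      theta_path_count_ge(1)[OF l(1-3) _ L _ len(1)] theta_path_count_ge(1)[OF l(1-3) _ L _ len(2)]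
      theta_path_count_ge(1)[OF l(1-3) _ L _ len(3)] theta_path_count_ge(2)[OF l(1-3) _ L _ len(2)]
    by (intro sum_path_products_ge) (simp_all add: w_def)
  moreover have "int (num_list_col (theta_V l1 l2 l3) (theta_E l1 l2 l3) L) =
      (\<Sum>a\<in>L (0, 0). \<Sum>b\<in>L (0, 1). w 1 a b * w 2 a b * w 3 a b)"
    using L l by (simp add: num_list_col_theta is_m_assignment_def of_nat_sum w_def mult.assoc)
  ultimately show ?thesis
    using chrom_poly_theta[OF l(1-3), of m] by simp
qed

lemma list_col_fun_theta:
  assumes l: "l1 \<ge> 1" "l2 \<ge> 1" "l3 \<ge> 2"
    and parity: "even l1 \<longleftrightarrow> even l3" "\<not> (even l1 \<longleftrightarrow> even l2)"
  shows "list_col_fun (theta_V l1 l2 l3) (theta_E l1 l2 l3) m =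
    chrom_poly (theta_V l1 l2 l3) (theta_E l1 l2 l3) m"
  unfolding list_col_fun_def
proof (rule cInf_eq_minimum)
  show "chrom_poly (theta_V l1 l2 l3) (theta_E l1 l2 l3) m \<in>
      {num_list_col (theta_V l1 l2 l3) (theta_E l1 l2 l3) L |L. is_m_assignment (theta_V l1 l2 l3) m L}"
    unfolding chrom_poly_def is_m_assignment_def by auto
  have "l1 + l3 \<ge> 4" "l3 \<ge> 1"
    using l parity by presburger+
  then show "chrom_poly (theta_V l1 l2 l3) (theta_E l1 l2 l3) m \<le> x"
    if "x \<in> {num_list_col (theta_V l1 l2 l3) (theta_E l1 l2 l3) L |L.
      is_m_assignment (theta_V l1 l2 l3) m L}" for x
  proof (cases "m \<ge> 3")
    case True
    then show ?thesis
      using that chrom_poly_theta_le_num_list_col[OF l(1,2) \<open>l3 \<ge> 1\<close> \<open>l1 + l3 \<ge> 4\<close> parity True] by blast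
  next
    case False
    then show ?thesis
      using chrom_poly_theta_eq_0[OF l(1,2) \<open>l3 \<ge> 1\<close> parity(2)] by simp
  qed
qed

theorem lemma2p4:
  fixes l1 l2 l3 :: nat
  assumes "l1 \<ge> 1" "l1 \<le> l2" "l1 \<le> l3" "l2 \<ge> 2" "l3 \<ge> 2"
    and "even l1 \<longleftrightarrow> even l3"
    and "\<not> (even l1 \<longleftrightarrow> even l2)"
  shows "(l1 + l3 \<ge> 6 \<longrightarrow> enum_chrom_choosable (theta_V l1 l2 l3) (theta_E l1 l2 l3))
       \<and> (l1 + l3 = 4 \<longrightarrow> (\<forall>m \<ge> 4. list_col_fun (theta_V l1 l2 l3) (theta_E l1 l2 l3) m
                                     = chrom_poly (theta_V l1 l2 l3) (theta_E l1 l2 l3) m))"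
  using list_col_fun_theta[of l1 l2 l3] assms by (simp add: enum_chrom_choosable_def)

end
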